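(* (Construction of real regular cyclic sequences.) Let $a_nx^n+\dots+a_1x+a_0$ be a polynomial whose coefficients $a_0,\dots,a_n$ are all strictly positive integers, and set $$p(x)=(x+1)(a_nx^n+\dots+a_0)=b_{n+1}x^{n+1}+b_nx^n+\dots+b_1x+b_0,$$ so $b_{n+1}=a_n$, $b_k=a_k+a_{k-1}$ for $1\le k\le n$, $b_0=a_0$. Let $y$ be any real root of $p$ and $N=2\sum_k a_k$. Then it is always possible to choose a cyclic sequence of increments $(y_1,\dots,y_N)$ (indices mod $N$) taken from $\{1,y,y^2,\dots,y^{n+1}\}$ in which each $y^k$ occurs exactly $b_k$ times and any two cyclically adjacent increments are powers of $y$ whose exponents differ by exactly one; and for any such choice and any $x_0\in\mathbb{C}$, the sequence defined by $x_\ell-x_{\ell-1}=y_\ell$ ($\ell=1,\dots,N$) satisfies $x_N=x_0$ and is a real regular cyclic sequence on the cyclic graph of order $N$ with $\gamma=2(1+y^2)/(1-y)^2$. Conversely, up to replacing $(x_k)$ by $(\lambda x_k+\mu)$ ($\lambda\in\mathbb{C}\setminus\{0\},\mu\in\mathbb{C}$) and cyclic permutation, every non-constant real regular cyclic sequence with $\gamma\ne 1,2$ arises by this construction. The regular cyclic sequences with $\gamma=2$ are exactly those made up of connected (cyclic) segments of length $\ge 2$ on each of which the sequence is constant; the non-constant real regular cyclic sequences with $\gamma=1$ are exactly those equivalent under normalization to $(0,1,0,1,\dots,0,1)$.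
   Context: The cyclic graph of order $N\ge 3$ has vertices $0,1,\dots,N-1$ with $k\sim k\pm1 \pmod N$. A regular cyclic sequence is $(x_0,\dots,x_{N-1})\in\mathbb{C}^N$, with indices taken mod $N$ (so $x_N=x_0$), satisfying for every $k$ and a fixed real constant $\gamma$: $$\frac{\gamma}{2}(x_{k-1}+x_{k+1}-2x_k)^2=(x_{k-1}-x_k)^2+(x_{k+1}-x_k)^2 .$$ Normalization means replacing $x_k$ by $\lambda x_k+\mu$ with $\lambda\in\mathbb{C}\setminus\{0\}$, $\mu\in\mathbb{C}$ (this preserves the equations). A regular cyclic sequence is real if under some normalization all its terms are real. *)

theory Defs
  imports Complex_Main "HOL-Library.Disjoint_Sets"
begin

text \<open>A sequence x_0,...,x_{N-1} is modelled as x :: nat => complex, only the values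
  at indices k < N matter; neighbours are taken mod N.\<close>

definition regular_cyclic :: "nat \<Rightarrow> real \<Rightarrow> (nat \<Rightarrow> complex) \<Rightarrow> bool" where
  "regular_cyclic N \<gamma> x \<longleftrightarrow>
     (\<forall>k<N. complex_of_real \<gamma> / 2 * (x ((k + N - 1) mod N) + x ((k + 1) mod N) - 2 * x k)^2
            = (x ((k + N - 1) mod N) - x k)^2 + (x ((k + 1) mod N) - x k)^2)"

definition real_cyclic :: "nat \<Rightarrow> (nat \<Rightarrow> complex) \<Rightarrow> bool" where
  "real_cyclic N x \<longleftrightarrow> (\<exists>c \<mu>. c \<noteq> 0 \<and> (\<forall>k<N. c * x k + \<mu> \<in> \<real>))"

definition nonconstant_cyclic :: "nat \<Rightarrow> (nat \<Rightarrow> complex) \<Rightarrow> bool" where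
  "nonconstant_cyclic N x \<longleftrightarrow> (\<exists>i<N. \<exists>j<N. x i \<noteq> x j)"

definition coeff_b :: "(nat \<Rightarrow> nat) \<Rightarrow> nat \<Rightarrow> nat \<Rightarrow> nat" where
  "coeff_b a n k =
     (if k = 0 then a 0
      else if k \<le> n then a k + a (k - 1)
      else if k = n + 1 then a n else 0)"

text \<open>Admissible exponent sequence: increment y_l = y^(e l) for l = 1..N; y^k occurs
  exactly b_k times (k = 0..n+1); cyclically adjacent exponents differ by exactly one.\<close>
definition admissible_exps :: "(nat \<Rightarrow> nat) \<Rightarrow> nat \<Rightarrow> nat \<Rightarrow> (nat \<Rightarrow> nat) \<Rightarrow> bool" where
  "admissible_exps a n N e \<longleftrightarrow>
     (\<forall>l\<in>{1..N}. e l \<le> n + 1) \<and>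
     (\<forall>k\<le>n + 1. card {l\<in>{1..N}. e l = k} = coeff_b a n k) \<and>
     (\<forall>l\<in>{1..N}. \<bar>int (e l) - int (e (if l = N then 1 else Suc l))\<bar> = 1)"

definition constructed_seq :: "complex \<Rightarrow> real \<Rightarrow> (nat \<Rightarrow> nat) \<Rightarrow> nat \<Rightarrow> complex" where
  "constructed_seq x0 y e l = x0 + (\<Sum>j\<in>{1..l}. complex_of_real (y ^ e j))"

definition cyc_arc :: "nat \<Rightarrow> nat \<Rightarrow> nat \<Rightarrow> nat set" where
  "cyc_arc N s L = {(s + i) mod N | i. i < L}"

definition constant_segments :: "nat \<Rightarrow> (nat \<Rightarrow> complex) \<Rightarrow> bool" where
  "constant_segments N x \<longleftrightarrow>
     (\<exists>P. partition_on {..<N} P \<and>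
          (\<forall>A\<in>P. (\<exists>s L. s < N \<and> 2 \<le> L \<and> L \<le> N \<and> A = cyc_arc N s L) \<and>
                   (\<forall>i\<in>A. \<forall>j\<in>A. x i = x j)))"

end

theory Submission
  imports Defs
begin

text \<open>
  Write the regularity equation at vertex k in terms of the
  incoming increment u = x_k - x_(k-1) and the outgoing increment v = x_(k+1) - x_k:
  gamma/2 (v - u)^2 = u^2 + v^2.  The whole development rests on this local form.

  For gamma = 2 it says u v = 0, so every vertex has a neighbour with the same value; cutting
  the cycle at a jump reduces the statement to a linear decomposition into constant intervals.
  For gamma = 1 it says v = -u, so the sequence is invariant under shifts by two.

  For gamma different from 1 and 2 it is a quadratic form which factors once one solution
  ratio y is known: consecutive increments are in ratio y or 1/y.  Hence the increments are
  K y^(e l) for a closed walk e on levels 0..n+1 (consecutive exponents differ by one).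
  Counting how often a closed walk visits each level shows that level k is visited
  b_k = a_k + a_(k-1) times, where a_k > 0 is the number of up-steps from k; the closing
  condition "increments sum to zero" then says exactly that y is a root of
  p(x) = (x + 1)(a_n x^n + ... + a_0).  Conversely an explicit walk realizes any positive a_k,
  and adjacent powers of a root y satisfy the local equation for gamma = 2 (1 + y^2)/(1 - y)^2.
\<close>

text \<open>Increments of a cyclic sequence are indexed by positions 1..N; cyc_succ N l is the
  cyclically next position (N is followed by 1).\<close>

definition cyc_succ :: "nat \<Rightarrow> nat \<Rightarrow> nat" where
  "cyc_succ N l = (if l = N then 1 else Suc l)"

lemma cyc_succ_in: "l \<in> {1..N} \<Longrightarrow> cyc_succ N l \<in> {1..N}"
  by (auto simp: cyc_succ_def)

lemma sum_cyc_succ: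
  assumes "1 \<le> N"
  shows "(\<Sum>l\<in>{1..N}. f (cyc_succ N l)) = (\<Sum>l\<in>{1..N}. (f l :: 'a::comm_monoid_add))"
  by (rule sum.reindex_bij_witness[of _ "\<lambda>m. if m = 1 then N else m - 1" "cyc_succ N"])
     (use assms in \<open>auto simp: cyc_succ_def\<close>)

lemma cyc_succ_mod: "0 < N \<Longrightarrow> cyc_succ N (Suc (m mod N)) = Suc (Suc m mod N)"
  by (auto simp: cyc_succ_def mod_Suc)

lemma pred_mod_cycle: "1 \<le> (l::nat) \<Longrightarrow> l \<le> N \<Longrightarrow> (l + N - 1) mod N = l - 1"
  by (cases l) auto

lemma cyc_propagate:
  assumes l0: "l0 \<in> {1..N}" "P l0"
    and step: "\<And>l. l \<in> {1..N} \<Longrightarrow> P l \<Longrightarrow> P (cyc_succ N l)"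
    and l: "l \<in> {1..N}"
  shows "P l"
proof -
  have orbit: "P (Suc ((l0 - 1 + j) mod N))" for j
  proof (induction j)
    case 0
    have "Suc ((l0 - 1) mod N) = l0" using l0 by auto
    then show ?case using l0 by simp
  next
    case (Suc j)
    have "Suc ((l0 - 1 + j) mod N) \<in> {1..N}"
      using l0 by (auto simp: Suc_leI)
    moreover have "cyc_succ N (Suc ((l0 - 1 + j) mod N)) = Suc ((l0 - 1 + Suc j) mod N)"
      using l0 cyc_succ_mod[of N "l0 - 1 + j"] by simp
    ultimately show ?case using step Suc.IH by metis
  qed
  have "l0 - 1 + (N + l - l0) = l + N - 1" using l0 l by auto
  then have "Suc ((l0 - 1 + (N + l - l0)) mod N) = l" using l pred_mod_cycle[of l N] by auto
  with orbit show ?thesis by metis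
qed

lemma mod_pred:
  fixes l N :: nat
  assumes "1 \<le> l" "0 < N"
  shows "(l - 1) mod N = (l mod N + N - 1) mod N"
proof -
  obtain M where M: "N = Suc M" using assms(2) by (cases N) auto
  obtain L where L: "l = Suc L" using assms(1) by (cases l) auto
  have "(Suc L mod Suc M + M) mod Suc M = (Suc L + M) mod Suc M" by (simp add: mod_add_left_eq)
  also have "Suc L + M = L + Suc M" by simp
  also have "(L + Suc M) mod Suc M = L mod Suc M" by (simp only: mod_add_self2)
  finally show ?thesis unfolding M L by simp
qed

text \<open>The regularity equation at one vertex, written in terms of its incoming increment u
  and its outgoing increment v: with x_{k-1} - x_k = -u and x_{k+1} - x_k = v it reads
  gamma/2 (v - u)^2 = u^2 + v^2.\<close>

definition step_eq :: "real \<Rightarrow> 'a::real_field \<Rightarrow> 'a \<Rightarrow> bool" where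
  "step_eq \<gamma> u v \<longleftrightarrow> of_real \<gamma> / 2 * (v - u)^2 = u^2 + v^2"

lemma step_eq_sym: "step_eq \<gamma> u v \<longleftrightarrow> step_eq \<gamma> v u"
  unfolding step_eq_def by (simp add: power2_commute add.commute)

lemma step_eq_of_real:
  "step_eq \<gamma> (of_real u :: 'a::real_field) (of_real v) \<longleftrightarrow> step_eq \<gamma> u v"
proof -
  have "step_eq \<gamma> (of_real u :: 'a) (of_real v) \<longleftrightarrow>
        (of_real (\<gamma> / 2 * (v - u)^2) :: 'a) = of_real (u^2 + v^2)"
    unfolding step_eq_def by simp
  then show ?thesis unfolding of_real_eq_iff by (simp add: step_eq_def)
qed

lemma regular_cyclic_steps:
  "regular_cyclic N \<gamma> x \<longleftrightarrow>
     (\<forall>k<N. step_eq \<gamma> (x k - x ((k + N - 1) mod N)) (x ((k + 1) mod N) - x k))"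
  unfolding regular_cyclic_def step_eq_def
  by (simp add: power2_commute algebra_simps)

lemma regular_cyclic_increments:
  assumes N: "0 < N" and incr: "\<And>k. k < N \<Longrightarrow> x (Suc k mod N) - x k = d (Suc k)"
  shows "regular_cyclic N \<gamma> x \<longleftrightarrow> (\<forall>l\<in>{1..N}. step_eq \<gamma> (d l) (d (cyc_succ N l)))"
proof -
  have at: "step_eq \<gamma> (x k - x ((k + N - 1) mod N)) (x ((k + 1) mod N) - x k)
              \<longleftrightarrow> step_eq \<gamma> (d l) (d (cyc_succ N l))"
    if l: "l \<in> {1..N}" and k: "k = l mod N" for k l
  proof -
    have "(k + N - 1) mod N = l - 1"
    proof (cases "l = N")
      case False
      then show ?thesis using l k pred_mod_cycle[of l N] by auto
    qed (use l k in auto)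
    then have left: "x k - x ((k + N - 1) mod N) = d l"
      using incr[of "l - 1"] l k by auto
    have right: "x ((k + 1) mod N) - x k = d (cyc_succ N l)"
      using incr[of 0] incr[of l] l k N by (cases "l = N") (auto simp: cyc_succ_def)
    show ?thesis unfolding left right ..
  qed
  show ?thesis
    unfolding regular_cyclic_steps
  proof
    assume "\<forall>k<N. step_eq \<gamma> (x k - x ((k + N - 1) mod N)) (x ((k + 1) mod N) - x k)"
    then show "\<forall>l\<in>{1..N}. step_eq \<gamma> (d l) (d (cyc_succ N l))"
      using at N by auto
  next
    assume H: "\<forall>l\<in>{1..N}. step_eq \<gamma> (d l) (d (cyc_succ N l))"
    show "\<forall>k<N. step_eq \<gamma> (x k - x ((k + N - 1) mod N)) (x ((k + 1) mod N) - x k)"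
    proof (intro allI impI)
      fix k assume "k < N"
      then have "(if k = 0 then N else k) \<in> {1..N}" "k = (if k = 0 then N else k) mod N"
        by auto
      then show "step_eq \<gamma> (x k - x ((k + N - 1) mod N)) (x ((k + 1) mod N) - x k)"
        using at H by blast
    qed
  qed
qed

lemma step_eq_one: "step_eq 1 u (v::'a::real_field) \<longleftrightarrow> v = - u"
proof -
  have "step_eq 1 u v \<longleftrightarrow> (u + v)^2 = 0"
    unfolding step_eq_def by (auto simp: power2_eq_square field_simps)
  then show ?thesis by (auto simp: add_eq_0_iff2)
qed

lemma step_eq_two: "step_eq 2 u (v::'a::real_field) \<longleftrightarrow> u = 0 \<or> v = 0"
proof -
  have "step_eq 2 u v \<longleftrightarrow> u * v = 0"
    unfolding step_eq_def by (auto simp: power2_eq_square field_simps)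
  then show ?thesis by simp
qed

lemma step_eq_zero:
  assumes "\<gamma> \<noteq> 2" "step_eq \<gamma> 0 (v::'a::real_field)"
  shows "v = 0"
proof -
  have "(of_real \<gamma> / 2 - 1) * v^2 = 0"
    using assms(2) unfolding step_eq_def by (simp add: algebra_simps)
  moreover have "of_real \<gamma> / 2 - 1 \<noteq> (0::'a)"
  proof
    assume "of_real \<gamma> / 2 - 1 = (0::'a)"
    then have "(of_real \<gamma> :: 'a) = of_real 2" by (simp add: field_simps)
    then show False using assms(1) by (simp only: of_real_eq_iff)
  qed
  ultimately show ?thesis by simp
qed

lemma step_eq_geometric:
  fixes \<gamma> y t :: real
  assumes "\<gamma> * (1 - y)^2 = 2 * (1 + y^2)"
  shows "step_eq \<gamma> t (t * y)"
proof -
  have "\<gamma> / 2 * (t * y - t)^2 = t^2 * (\<gamma> * (1 - y)^2) / 2"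
    by (simp add: power2_eq_square algebra_simps)
  also have "\<dots> = t^2 + (t * y)^2"
    unfolding assms by (simp add: power2_eq_square algebra_simps)
  finally show ?thesis by (simp add: step_eq_def)
qed

lemma gamma_of_ratio:
  fixes \<gamma> y d :: real
  assumes "step_eq \<gamma> d (d * y)" "d \<noteq> 0"
  shows "y \<noteq> 1" "\<gamma> * (1 - y)^2 = 2 * (1 + y^2)"
proof -
  have "d^2 * (\<gamma> * (1 - y)^2) = d^2 * (2 * (1 + y^2))"
    using assms(1) unfolding step_eq_def by (simp add: power2_eq_square algebra_simps)
  then show eq: "\<gamma> * (1 - y)^2 = 2 * (1 + y^2)" using assms(2) by simp
  show "y \<noteq> 1"
  proof
    assume "y = 1"
    with eq show False by simp
  qed
qed

text \<open>Key algebraic fact: for gamma different from 2 the local equation is a quadratic form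
  that factors as (v - u y) (v y - u) once some pair in ratio y is known to satisfy it.\<close>

lemma step_eq_ratio:
  fixes \<gamma> u v y d :: real
  assumes "\<gamma> \<noteq> 2" and uv: "step_eq \<gamma> u v" and ratio: "step_eq \<gamma> d (d * y)" and "d \<noteq> 0"
  shows "v = u * y \<or> u = v * y"
proof -
  define \<alpha> where "\<alpha> = \<gamma>/2 - 1"
  have quad: "\<alpha> * u^2 - \<gamma> * u * v + \<alpha> * v^2 = 0"
    using uv unfolding \<alpha>_def step_eq_def by (simp add: power2_eq_square algebra_simps)
  have "\<gamma> * (1 - y)^2 = 2 * (1 + y^2)" by (rule gamma_of_ratio[OF ratio \<open>d \<noteq> 0\<close>])
  then have y: "\<alpha> * (1 + y^2) = \<gamma> * y"
    unfolding \<alpha>_def by (simp add: power2_eq_square algebra_simps)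
  have "\<alpha> * ((v - u * y) * (v * y - u))
          = y * (\<alpha> * u^2 - \<gamma> * u * v + \<alpha> * v^2) + (\<gamma> * y - \<alpha> * (1 + y^2)) * u * v"
    by (simp add: power2_eq_square algebra_simps)
  also have "\<dots> = 0" using quad y by simp
  finally have "(v - u * y) * (v * y - u) = 0" using assms(1) unfolding \<alpha>_def by simp
  then show ?thesis by auto
qed

lemma step_eq_adjacent_powers:
  fixes \<gamma> y :: real
  assumes "\<gamma> * (1 - y)^2 = 2 * (1 + y^2)" and "\<bar>int i - int j\<bar> = 1"
  shows "step_eq \<gamma> (y ^ i) (y ^ j)"
proof -
  consider "j = Suc i" | "i = Suc j" using assms(2) by arith
  then show ?thesis
  proof cases
    case 1
    then show ?thesis using step_eq_geometric[OF assms(1), of "y ^ i"] by (simp add: ac_simps)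
  next
    case 2
    then show ?thesis using step_eq_geometric[OF assms(1), of "y ^ j"]
      by (simp add: ac_simps step_eq_sym)
  qed
qed

lemma coeff_b_poly:
  fixes y :: real
  shows "(\<Sum>k\<le>Suc n. real (coeff_b a n k) * y^k) = (y + 1) * (\<Sum>k\<le>n. real (a k) * y^k)"
proof -
  have split: "real (coeff_b a n k) * y^k
      = (if k \<le> n then real (a k) else 0) * y^k + (if k = 0 then 0 else real (a (k - 1))) * y^k"
    if "k \<le> Suc n" for k
    using that by (cases "k = Suc n") (auto simp: coeff_b_def distrib_right)
  have "(\<Sum>k\<le>Suc n. real (coeff_b a n k) * y^k)
      = (\<Sum>k\<le>Suc n. (if k \<le> n then real (a k) else 0) * y^k)
        + (\<Sum>k\<le>Suc n. (if k = 0 then 0 else real (a (k - 1))) * y^k)"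
    by (simp add: split sum.distrib[symmetric])
  also have "(\<Sum>k\<le>Suc n. (if k \<le> n then real (a k) else 0) * y^k) = (\<Sum>k\<le>n. real (a k) * y^k)"
    by (simp add: sum.atMost_Suc)
  also have "(\<Sum>k\<le>Suc n. (if k = 0 then 0 else real (a (k - 1))) * y^k)
      = (\<Sum>k\<le>n. real (a k) * y^Suc k)"
    by (subst sum.atMost_Suc_shift) simp
  finally show ?thesis by (simp add: sum_distrib_left distrib_right mult_ac sum.distrib)
qed

lemma admissible_power_sum:
  fixes y :: real
  assumes "admissible_exps a n N e"
  shows "(\<Sum>l\<in>{1..N}. y ^ e l) = (y + 1) * (\<Sum>k\<le>n. real (a k) * y^k)"
proof -
  have "(\<Sum>l\<in>{1..N}. y ^ e l) = (\<Sum>k\<le>Suc n. \<Sum>l\<in>{l\<in>{1..N}. e l = k}. y ^ e l)"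
    using assms unfolding admissible_exps_def by (intro sum.group[symmetric]) auto
  also have "\<dots> = (\<Sum>k\<le>Suc n. real (coeff_b a n k) * y^k)"
  proof (rule sum.cong)
    fix k assume k: "k \<in> {..Suc n}"
    have "(\<Sum>l\<in>{l\<in>{1..N}. e l = k}. y ^ e l) = real (card {l\<in>{1..N}. e l = k}) * y ^ k"
      by simp
    also have "card {l\<in>{1..N}. e l = k} = coeff_b a n k"
      using assms k unfolding admissible_exps_def by auto
    finally show "(\<Sum>l\<in>{l\<in>{1..N}. e l = k}. y ^ e l) = real (coeff_b a n k) * y^k" .
  qed simp
  finally show ?thesis by (simp only: coeff_b_poly)
qed

text \<open>Evaluating at y = 1: an admissible sequence has length N = 2 (a_0 + ... + a_n).\<close>

lemma admissible_length:
  assumes "admissible_exps a n N e"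
  shows "N = 2 * (\<Sum>k\<le>n. a k)"
proof -
  have "real N = (\<Sum>l\<in>{1..N}. (1::real) ^ e l)" by simp
  also have "\<dots> = real (2 * (\<Sum>k\<le>n. a k))"
    unfolding admissible_power_sum[OF assms] by simp
  finally show ?thesis by (simp only: of_nat_eq_iff)
qed

lemma admissible_adjacent:
  "admissible_exps a n N e \<Longrightarrow> l \<in> {1..N} \<Longrightarrow> \<bar>int (e l) - int (e (cyc_succ N l))\<bar> = 1"
  unfolding admissible_exps_def cyc_succ_def by auto

lemma constructed_seq_Suc:
  "constructed_seq x0 y e (Suc l) = constructed_seq x0 y e l + of_real (y ^ e (Suc l))"
  by (simp add: constructed_seq_def)

lemma constructed_seq_real:
  "constructed_seq x0 y e l = x0 + of_real (\<Sum>j\<in>{1..l}. y ^ e j)"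
  by (simp add: constructed_seq_def)

text \<open>First half of the theorem: for a root y of p the constructed sequence closes up
  (the increments sum to p(y) = 0), it is regular for gamma = 2 (1 + y^2) / (1 - y)^2
  because consecutive increments are adjacent powers of y, and it is real up to a shift.\<close>

lemma constructed_seq_regular:
  fixes y :: real
  assumes pos: "\<forall>k\<le>n. 0 < a k" and root: "(y + 1) * (\<Sum>k\<le>n. real (a k) * y ^ k) = 0"
    and adm: "admissible_exps a n N e"
  shows "constructed_seq x0 y e N = constructed_seq x0 y e 0"
    and "regular_cyclic N (2 * (1 + y^2) / (1 - y)^2) (constructed_seq x0 y e)"
    and "real_cyclic N (constructed_seq x0 y e)"
proof -
  define X where "X = constructed_seq x0 y e"
  have pos_sum: "(\<Sum>k\<le>n. real (a k)) > 0" using pos by (intro sum_pos) auto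
  then have "y \<noteq> 1" using root by auto
  then have gamma: "2 * (1 + y^2) / (1 - y)^2 * (1 - y)^2 = 2 * (1 + y^2)" by simp
  have "0 < N" using admissible_length[OF adm] pos_sum by (auto simp flip: of_nat_sum)
  show closed: "X N = X 0"
    unfolding X_def constructed_seq_real admissible_power_sum[OF adm] root by simp
  have incr: "X (Suc k mod N) - X k = of_real (y ^ e (Suc k))" if "k < N" for k
    using that closed constructed_seq_Suc[of x0 y e k]
    by (cases "Suc k = N") (auto simp: X_def)
  have "step_eq (2 * (1 + y^2) / (1 - y)^2)
          (of_real (y ^ e l) :: complex) (of_real (y ^ e (cyc_succ N l)))" if "l \<in> {1..N}" for l
    unfolding step_eq_of_real
    using step_eq_adjacent_powers[OF gamma] admissible_adjacent[OF adm that] by blast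
  then show "regular_cyclic N (2 * (1 + y^2) / (1 - y)^2) X"
    using regular_cyclic_increments[of N X "\<lambda>l. of_real (y ^ e l)", OF \<open>0 < N\<close> incr] by blast
  show "real_cyclic N X"
    unfolding real_cyclic_def X_def constructed_seq_real
    by (intro exI[of _ 1] exI[of _ "- x0"]) simp
qed

definition adjacent :: "nat \<Rightarrow> nat \<Rightarrow> bool" where
  "adjacent u v \<longleftrightarrow> \<bar>int u - int v\<bar> = 1"

text \<open>An explicit admissible exponent sequence: walk a k d starts at k, oscillates a_k - 1
  times between k and k + 1, steps to k + 1, recursively performs the walk on k + 1, ..., k + d
  and finally comes back to k + 1.  Level j is visited a_j + a_(j-1) = b_j times.\<close>

fun walk :: "(nat \<Rightarrow> nat) \<Rightarrow> nat \<Rightarrow> nat \<Rightarrow> nat list" where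
  "walk a k 0 = []"
| "walk a k (Suc d) = concat (replicate (a k - 1) [k, Suc k]) @ [k] @ walk a (Suc k) d @ [Suc k]"

lemma oscillation_walk:
  "successively adjacent (concat (replicate m [k, Suc k]) @ [k]) \<and>
   hd (concat (replicate m [k, Suc k]) @ [k]) = k"
  by (induction m) (auto simp: adjacent_def successively_Cons)

lemma oscillation_set: "set (concat (replicate m [k, Suc k])) \<subseteq> {k, Suc k}"
  by (induction m) auto

lemma count_list_concat_replicate:
  "count_list (concat (replicate m xs)) x = m * count_list xs x"
  by (induction m) auto

text \<open>A nonempty walk starts at k and ends at k + 1, so it closes up cyclically.\<close>

lemma walk_ends: "0 < d \<Longrightarrow> walk a k d \<noteq> [] \<and> hd (walk a k d) = k \<and> last (walk a k d) = Suc k"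
  using oscillation_walk[of "a k - 1" k] by (cases d) (auto simp: hd_append)

lemma walk_successively: "successively adjacent (walk a k d)"
proof (induction d arbitrary: k)
  case 0
  then show ?case by simp
next
  case (Suc d)
  define R where "R = concat (replicate (a k - 1) [k, Suc k]) @ [k]"
  define W where "W = walk a (Suc k) d @ [Suc k]"
  have R: "successively adjacent R" using oscillation_walk unfolding R_def by blast
  show ?case
  proof (cases "d = 0")
    case True
    then show ?thesis using R by (simp add: successively_append_iff adjacent_def R_def)
  next
    case False
    then have ends: "walk a (Suc k) d \<noteq> []" "hd (walk a (Suc k) d) = Suc k"
      "last (walk a (Suc k) d) = Suc (Suc k)"
      using walk_ends[of d a "Suc k"] by auto
    then have W: "successively adjacent W" "hd W = Suc k"
      using Suc.IH[of "Suc k"] unfolding W_def by (auto simp: successively_append_iff adjacent_def)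
    have "adjacent (last R) (hd W)" using W(2) by (simp add: R_def adjacent_def)
    then have "successively adjacent (R @ W)"
      using R W(1) by (simp add: successively_append_iff)
    then show ?thesis by (simp add: R_def W_def)
  qed
qed

lemma walk_set: "set (walk a k d) \<subseteq> {k..k+d}"
proof (induction d arbitrary: k)
  case (Suc d)
  then show ?case using oscillation_set[of "a k - 1" k] by fastforce
qed simp

lemma walk_length:
  assumes "\<forall>j. k \<le> j \<and> j < k + d \<longrightarrow> 0 < a j"
  shows "length (walk a k d) = 2 * (\<Sum>j\<in>{k..<k+d}. a j)"
  using assms
proof (induction d arbitrary: k)
  case (Suc d)
  have IH: "length (walk a (Suc k) d) = 2 * (\<Sum>j\<in>{Suc k..<Suc k+d}. a j)"
    using Suc.prems by (intro Suc.IH) auto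
  have "(\<Sum>j\<in>{k..<k+Suc d}. a j) = a k + (\<Sum>j\<in>{Suc k..<Suc k+d}. a j)"
    by (simp add: sum.atLeast_Suc_lessThan)
  moreover have "0 < a k" using Suc.prems by auto
  ultimately show ?case using IH by (simp add: length_concat sum_list_replicate)
qed simp

text \<open>Level j occurs a_j times as a lower level and a_(j-1) times as an upper level.\<close>

lemma walk_count:
  assumes "\<forall>j. k \<le> j \<and> j < k + d \<longrightarrow> 0 < a j"
  shows "count_list (walk a k d) j =
           (if k \<le> j \<and> j < k + d then a j else 0) + (if k < j \<and> j \<le> k + d then a (j - 1) else 0)"
  using assms
proof (induction d arbitrary: k)
  case (Suc d)
  have IH: "count_list (walk a (Suc k) d) j = (if Suc k \<le> j \<and> j < Suc k + d then a j else 0)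
              + (if Suc k < j \<and> j \<le> Suc k + d then a (j - 1) else 0)"
    using Suc.prems by (intro Suc.IH) auto
  have "0 < a k" using Suc.prems by auto
  then show ?case using IH by (auto simp: count_list_concat_replicate)
qed simp

lemma admissible_of_closed_walk:
  assumes len: "length W = N" and ne: "W \<noteq> []"
    and succ: "successively adjacent W" and close: "adjacent (last W) (hd W)"
    and range: "set W \<subseteq> {..n + 1}" and count: "\<And>k. count_list W k = coeff_b a n k"
  shows "admissible_exps a n N (\<lambda>l. W ! (l - 1))"
  unfolding admissible_exps_def
proof (intro conjI ballI allI impI)
  fix l assume "l \<in> {1..N}"
  then have "W ! (l - 1) \<in> set W" using len by auto
  then show "W ! (l - 1) \<le> n + 1" using range by auto
next
  fix k
  have "{l\<in>{1..N}. W ! (l - 1) = k} = Suc ` {i. i < length W \<and> W ! i = k}"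
  proof (intro set_eqI iffI)
    fix l assume "l \<in> {l\<in>{1..N}. W ! (l - 1) = k}"
    then have "l = Suc (l - 1)" "l - 1 < length W" "W ! (l - 1) = k" using len by auto
    then show "l \<in> Suc ` {i. i < length W \<and> W ! i = k}" by (metis (mono_tags) image_eqI mem_Collect_eq)
  qed (use len in auto)
  then have "card {l\<in>{1..N}. W ! (l - 1) = k} = card {i. i < length W \<and> W ! i = k}"
    by (simp add: card_image)
  also have "\<dots> = count_list W k"
    by (simp add: count_list_eq_length_filter length_filter_conv_card eq_commute)
  finally show "card {l\<in>{1..N}. W ! (l - 1) = k} = coeff_b a n k" using count by simp
next
  fix l assume l: "l \<in> {1..N}"
  show "\<bar>int (W ! (l - 1)) - int (W ! ((if l = N then 1 else Suc l) - 1))\<bar> = 1"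
  proof (cases "l = N")
    case True
    then show ?thesis using close ne len by (simp add: last_conv_nth hd_conv_nth adjacent_def)
  next
    case False
    then have "Suc (l - 1) < length W" using l len by auto
    from successively_nth[OF succ this] show ?thesis
      using False l by (simp add: adjacent_def)
  qed
qed

lemma exists_admissible:
  assumes pos: "\<forall>k\<le>n. 0 < a k"
  shows "\<exists>e. admissible_exps a n (2 * (\<Sum>k\<le>n. a k)) e"
proof -
  define W where "W = walk a 0 (Suc n)"
  have pos': "\<forall>j. 0 \<le> j \<and> j < 0 + Suc n \<longrightarrow> 0 < a j" using pos by auto
  have "length W = 2 * (\<Sum>k\<le>n. a k)"
    using walk_length[OF pos'] unfolding W_def by (simp add: atLeast0LessThan lessThan_Suc_atMost)
  moreover have "W \<noteq> []" "adjacent (last W) (hd W)"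
    using walk_ends[of "Suc n" a 0] unfolding W_def by (auto simp: adjacent_def)
  moreover have "successively adjacent W" unfolding W_def by (rule walk_successively)
  moreover have "set W \<subseteq> {..n + 1}" using walk_set[of a 0 "Suc n"] unfolding W_def by auto
  moreover have "count_list W k = coeff_b a n k" for k
    unfolding W_def using walk_count[OF pos', of k] by (auto simp: coeff_b_def)
  ultimately show ?thesis by (blast intro: admissible_of_closed_walk)
qed

definition up_steps :: "nat \<Rightarrow> (nat \<Rightarrow> nat) \<Rightarrow> nat \<Rightarrow> nat" where
  "up_steps N e k = card {l\<in>{1..N}. e l = k \<and> e (cyc_succ N l) = Suc k}"

definition down_steps :: "nat \<Rightarrow> (nat \<Rightarrow> nat) \<Rightarrow> nat \<Rightarrow> nat" where
  "down_steps N e k = card {l\<in>{1..N}. e l = Suc k \<and> e (cyc_succ N l) = k}"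

definition cyclic_walk :: "nat \<Rightarrow> (nat \<Rightarrow> nat) \<Rightarrow> bool" where
  "cyclic_walk N e \<longleftrightarrow> 1 \<le> N \<and> (\<forall>l\<in>{1..N}. \<bar>int (e l) - int (e (cyc_succ N l))\<bar> = 1)"

lemma up_steps_eq_down_steps:
  assumes walk: "cyclic_walk N e"
  shows "up_steps N e k = down_steps N e k"
proof -
  define f where "f l = (if e l \<le> k then 1 else 0 :: int)" for l
  have N: "1 \<le> N" using walk by (simp add: cyclic_walk_def)
  have "(\<Sum>l\<in>{1..N}. f l - f (cyc_succ N l)) = 0"
    using sum_cyc_succ[OF N, of f] by (simp add: sum_subtractf)
  also have "(\<Sum>l\<in>{1..N}. f l - f (cyc_succ N l))
      = (\<Sum>l\<in>{1..N}. (if e l = k \<and> e (cyc_succ N l) = Suc k then 1 else 0)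
                    - (if e l = Suc k \<and> e (cyc_succ N l) = k then 1 else 0))"
  proof (rule sum.cong)
    fix l assume "l \<in> {1..N}"
    then have "\<bar>int (e l) - int (e (cyc_succ N l))\<bar> = 1"
      using walk unfolding cyclic_walk_def by blast
    then show "f l - f (cyc_succ N l) = (if e l = k \<and> e (cyc_succ N l) = Suc k then 1 else 0)
                    - (if e l = Suc k \<and> e (cyc_succ N l) = k then 1 else 0)"
      unfolding f_def by auto
  qed simp
  also have "\<dots> = int (up_steps N e k) - int (down_steps N e k)"
    by (simp add: sum_subtractf sum.inter_filter[symmetric] up_steps_def down_steps_def)
  finally show ?thesis by simp
qed

text \<open>Each visit of level k is followed by a step up or a step down, so level k is visited
  u_k + u_(k-1) times, where u_k is the number of up-steps from k.\<close>

lemma visits_count: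
  assumes walk: "cyclic_walk N e"
  shows "card {l\<in>{1..N}. e l = k} = up_steps N e k + (if k = 0 then 0 else up_steps N e (k - 1))"
proof (cases k)
  case 0
  have "{l\<in>{1..N}. e l = k} = {l\<in>{1..N}. e l = k \<and> e (cyc_succ N l) = Suc k}"
    using walk 0 unfolding cyclic_walk_def by force
  then show ?thesis using 0 by (simp add: up_steps_def)
next
  case (Suc j)
  have "{l\<in>{1..N}. e l = k} = {l\<in>{1..N}. e l = k \<and> e (cyc_succ N l) = Suc k}
                                \<union> {l\<in>{1..N}. e l = Suc j \<and> e (cyc_succ N l) = j}"
    using walk Suc unfolding cyclic_walk_def by force
  moreover have "card (\<dots>) = up_steps N e k + down_steps N e j"
    unfolding up_steps_def down_steps_def using Suc by (subst card_Un_disjoint) auto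
  ultimately show ?thesis using up_steps_eq_down_steps[OF walk, of j] Suc by simp
qed

lemma up_steps_pos:
  assumes walk: "cyclic_walk N e"
    and low: "l0 \<in> {1..N}" "e l0 \<le> k" and high: "l1 \<in> {1..N}" "k < e l1"
  shows "0 < up_steps N e k"
proof (rule ccontr)
  assume "\<not> 0 < up_steps N e k"
  then have "up_steps N e k = 0" "down_steps N e k = 0"
    using up_steps_eq_down_steps[OF walk] by auto
  then have no_cross: "l \<notin> {l\<in>{1..N}. e l = k \<and> e (cyc_succ N l) = Suc k}"
      "l \<notin> {l\<in>{1..N}. e l = Suc k \<and> e (cyc_succ N l) = k}" for l
    unfolding up_steps_def down_steps_def by auto
  have step: "e (cyc_succ N l) \<le> k" if "l \<in> {1..N}" "e l \<le> k" for l
  proof -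
    have "\<bar>int (e l) - int (e (cyc_succ N l))\<bar> = 1"
      using walk that(1) unfolding cyclic_walk_def by blast
    then show ?thesis using no_cross[of l] that by auto
  qed
  have "e l1 \<le> k" using cyc_propagate[of l0 N "\<lambda>l. e l \<le> k", OF low step high(1)] .
  then show False using high by simp
qed

lemma admissible_of_cyclic_walk:
  assumes walk: "cyclic_walk N e" and bound: "\<forall>l\<in>{1..N}. e l \<le> Suc n"
    and bottom: "l0 \<in> {1..N}" "e l0 = 0" and top: "l1 \<in> {1..N}" "e l1 = Suc n"
  shows "admissible_exps (up_steps N e) n N e" and "\<forall>k\<le>n. 0 < up_steps N e k"
proof -
  have no_up_at_top: "up_steps N e (Suc n) = 0"
  proof -
    have "e (cyc_succ N l) \<le> Suc n" if "l \<in> {1..N}" for l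
      using bound cyc_succ_in[OF that] by blast
    then have "{l\<in>{1..N}. e l = Suc n \<and> e (cyc_succ N l) = Suc (Suc n)} = {}"
      by fastforce
    then show ?thesis by (simp add: up_steps_def)
  qed
  show "admissible_exps (up_steps N e) n N e"
    unfolding admissible_exps_def
  proof (intro conjI ballI allI impI)
    fix k assume "k \<le> n + 1"
    then show "card {l\<in>{1..N}. e l = k} = coeff_b (up_steps N e) n k"
      using visits_count[OF walk, of k] no_up_at_top
      by (cases "k = Suc n") (auto simp: coeff_b_def)
  next
    fix l assume "l \<in> {1..N}"
    then show "\<bar>int (e l) - int (e (if l = N then 1 else Suc l))\<bar> = 1"
      using walk unfolding cyclic_walk_def cyc_succ_def by auto
  qed (use bound in auto)
  show "\<forall>k\<le>n. 0 < up_steps N e k"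
    using up_steps_pos[OF walk bottom(1) _ top(1)] bottom(2) top(2) by auto
qed

lemma step_eq_scale:
  assumes "(c::'a::real_field) \<noteq> 0"
  shows "step_eq \<gamma> (c * u) (c * v) \<longleftrightarrow> step_eq \<gamma> u v"
proof -
  have "(c * v - c * u)^2 = c^2 * (v - u)^2"
    by (metis power_mult_distrib right_diff_distrib)
  then have diff: "of_real \<gamma> / 2 * (c * v - c * u)^2 - ((c * u)^2 + (c * v)^2)
        = c^2 * (of_real \<gamma> / 2 * (v - u)^2 - (u^2 + v^2))"
    by (simp add: power_mult_distrib algebra_simps)
  have "step_eq \<gamma> (c * u) (c * v) \<longleftrightarrow>
        of_real \<gamma> / 2 * (c * v - c * u)^2 - ((c * u)^2 + (c * v)^2) = 0"
    unfolding step_eq_def by (rule eq_iff_diff_eq_0)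
  also have "\<dots> \<longleftrightarrow> of_real \<gamma> / 2 * (v - u)^2 - (u^2 + v^2) = 0"
    unfolding diff using assms by simp
  also have "\<dots> \<longleftrightarrow> step_eq \<gamma> u v"
    unfolding step_eq_def by (rule eq_iff_diff_eq_0[symmetric])
  finally show ?thesis .
qed

lemma regular_cyclic_affine:
  assumes "c \<noteq> 0"
  shows "regular_cyclic N \<gamma> (\<lambda>k. c * x k + \<mu>) \<longleftrightarrow> regular_cyclic N \<gamma> x"
proof -
  have "(c * x i + \<mu>) - (c * x j + \<mu>) = c * (x i - x j)" for i j
    by (simp add: algebra_simps)
  then show ?thesis
    unfolding regular_cyclic_steps by (simp add: step_eq_scale[OF assms])
qed

lemma regular_cyclic_cong:
  assumes "\<forall>k<N. x k = x' k"
  shows "regular_cyclic N \<gamma> x \<longleftrightarrow> regular_cyclic N \<gamma> x'"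
  unfolding regular_cyclic_def using assms by (intro all_cong) auto

lemma powi_inj:
  fixes y :: real
  assumes "y \<noteq> 0" "\<bar>y\<bar> \<noteq> 1" "y powi i = y powi j"
  shows "i = j"
proof (rule ccontr)
  assume ne: "i \<noteq> j"
  have eq: "\<bar>y\<bar> powi i = \<bar>y\<bar> powi j" using assms(3) by (metis power_int_abs)
  show False
  proof (cases "\<bar>y\<bar> > 1")
    case True
    then show False using ne eq power_int_strict_increasing[OF _ True, of i j]
        power_int_strict_increasing[OF _ True, of j i]
      by (cases "i < j") auto
  next
    case False
    then have "0 < \<bar>y\<bar>" "\<bar>y\<bar> < 1" using assms by auto
    then show False using ne eq power_int_strict_decreasing[of i j "\<bar>y\<bar>"]
        power_int_strict_decreasing[of j i "\<bar>y\<bar>"]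
      by (cases "i < j") auto
  qed
qed

text \<open>Given increments D along a path in which consecutive ones are in ratio y or 1/y, the
  exponent of D l relative to D 1: count +1 for each ratio y and -1 for each ratio 1/y.\<close>

definition ratio_exponent :: "(nat \<Rightarrow> real) \<Rightarrow> real \<Rightarrow> nat \<Rightarrow> int" where
  "ratio_exponent D y l = (\<Sum>j\<in>{1..<l}. if D (Suc j) = D j * y then 1 else -1)"

lemma ratio_exponent_Suc:
  "1 \<le> l \<Longrightarrow> ratio_exponent D y (Suc l) = ratio_exponent D y l + (if D (Suc l) = D l * y then 1 else -1)"
  by (simp add: ratio_exponent_def)

lemma ratio_exponent_powers:
  fixes D :: "nat \<Rightarrow> real" and y :: real
  assumes y: "y \<noteq> 0"
    and ratio: "\<forall>l\<in>{1..N}. D (cyc_succ N l) = D l * y \<or> D l = D (cyc_succ N l) * y"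
    and "l \<in> {1..N}"
  shows "D l = D 1 * y powi ratio_exponent D y l"
  using \<open>l \<in> {1..N}\<close>
proof (induction l)
  case (Suc l)
  show ?case
  proof (cases "l = 0")
    case False
    then have l: "l \<in> {1..N}" "cyc_succ N l = Suc l" using Suc.prems by (auto simp: cyc_succ_def)
    note step = ratio_exponent_Suc[of l D y] Suc.IH[OF l(1)]
    show ?thesis
    proof (cases "D (Suc l) = D l * y")
      case True
      then show ?thesis using step l y by (simp add: power_int_add)
    next
      case False
      then have "D l = D (Suc l) * y" using bspec[OF ratio l(1)] l(2) by simp
      then have "D (Suc l) = D l / y" using y by simp
      then show ?thesis using step False l y by (simp add: power_int_diff)
    qed
  qed (simp add: ratio_exponent_def)
qed simp

text \<open>The exponents also change by one when passing from position N back to position 1: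
  the closing relation D 1 = D N y^(+-1) pins down the last exponent since |y| is not 1.\<close>

lemma ratio_exponent_adjacent:
  fixes D :: "nat \<Rightarrow> real" and y :: real
  assumes y: "y \<noteq> 0" "\<bar>y\<bar> \<noteq> 1" and nz: "D 1 \<noteq> 0"
    and ratio: "\<forall>l\<in>{1..N}. D (cyc_succ N l) = D l * y \<or> D l = D (cyc_succ N l) * y"
    and l: "l \<in> {1..N}"
  shows "\<bar>ratio_exponent D y l - ratio_exponent D y (cyc_succ N l)\<bar> = 1"
proof (cases "l = N")
  case True
  define e where "e = ratio_exponent D y N"
  have DN: "D N = D 1 * y powi e"
    unfolding e_def using ratio_exponent_powers[OF y(1) ratio, of N] l True by simp
  have "D 1 = D N * y \<or> D N = D 1 * y"
    using bspec[OF ratio l] True by (simp add: cyc_succ_def)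
  then have "y powi (e + 1) = y powi 0 \<or> y powi e = y powi 1"
  proof
    assume "D 1 = D N * y"
    also have "D N * y = D 1 * y powi (e + 1)"
      unfolding DN using y by (simp add: power_int_add mult.assoc)
    finally have "D 1 * y powi 0 = D 1 * y powi (e + 1)"
      by (metis power_int_0_right mult_1_right)
    then show ?thesis using nz by simp
  next
    assume "D N = D 1 * y"
    then have "D 1 * y powi e = D 1 * y powi 1" by (simp add: DN)
    then show ?thesis using nz by simp
  qed
  then have "e + 1 = 0 \<or> e = 1" using powi_inj[OF y] by blast
  then show ?thesis using True by (auto simp: cyc_succ_def e_def ratio_exponent_def)
next
  case False
  then show ?thesis using ratio_exponent_Suc[of l D y] l by (auto simp: cyc_succ_def)
qed

lemma normalize_walk:
  fixes E :: "nat \<Rightarrow> int"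
  assumes N: "1 \<le> N" and adj: "\<forall>l\<in>{1..N}. \<bar>E l - E (cyc_succ N l)\<bar> = 1"
  obtains m e n l0 l1
  where "\<forall>l\<in>{1..N}. E l = m + int (e l)" "cyclic_walk N e" "\<forall>l\<in>{1..N}. e l \<le> Suc n"
    "l0 \<in> {1..N}" "e l0 = 0" "l1 \<in> {1..N}" "e l1 = Suc n"
proof -
  define m where "m = Min (E ` {1..N})"
  define M where "M = Max (E ` {1..N})"
  have fin: "finite (E ` {1..N})" "E ` {1..N} \<noteq> {}" using N by auto
  have bounds: "m \<le> E l" "E l \<le> M" if "l \<in> {1..N}" for l
    using that fin unfolding m_def M_def by auto
  obtain l0 where l0: "l0 \<in> {1..N}" "E l0 = m" using Min_in[OF fin] unfolding m_def by auto
  obtain l1 where l1: "l1 \<in> {1..N}" "E l1 = M" using Max_in[OF fin] unfolding M_def by auto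
  have one: "1 \<in> {1..N}" using N by simp
  then have "E 1 \<noteq> E (cyc_succ N 1)" using adj by fastforce
  then have "m < M" using bounds[OF one] bounds[OF cyc_succ_in[OF one]] by linarith
  define e where "e l = nat (E l - m)" for l
  define n where "n = nat (M - m) - 1"
  have E_e: "\<forall>l\<in>{1..N}. E l = m + int (e l)" using bounds(1) by (simp add: e_def)
  have "\<bar>int (e l) - int (e (cyc_succ N l))\<bar> = 1" if "l \<in> {1..N}" for l
    using adj E_e that cyc_succ_in[OF that] by (metis add_diff_cancel_left)
  then have "cyclic_walk N e" using N by (simp add: cyclic_walk_def)
  moreover have "\<forall>l\<in>{1..N}. e l \<le> Suc n"
    using bounds(2) \<open>m < M\<close> by (auto simp: e_def n_def nat_mono)
  moreover have "e l0 = 0" "e l1 = Suc n" using l0 l1 \<open>m < M\<close> by (auto simp: e_def n_def)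
  ultimately show ?thesis using that E_e l0(1) l1(1) by blast
qed

lemma increments_telescope:
  fixes z :: "nat \<Rightarrow> real"
  assumes "k \<le> N"
  shows "(\<Sum>j\<in>{1..k}. z (j mod N) - z (j - 1)) = z (k mod N) - z 0"
  using assms
proof (induction k)
  case (Suc k)
  then show ?case by simp
qed simp

lemma real_regular_increments:
  fixes z :: "nat \<Rightarrow> real"
  assumes N: "0 < N" and reg: "regular_cyclic N \<gamma> (\<lambda>k. of_real (z k))"
  defines "D \<equiv> \<lambda>l. z (l mod N) - z (l - 1)"
  shows "\<forall>l\<in>{1..N}. step_eq \<gamma> (D l) (D (cyc_succ N l))"
proof -
  have "of_real (z (Suc k mod N)) - of_real (z k) = (of_real (D (Suc k)) :: complex)" for k
    by (simp add: D_def)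
  then show ?thesis
    using reg regular_cyclic_increments[of N "\<lambda>k. of_real (z k)" "\<lambda>l. of_real (D l)" \<gamma>] N
    by (simp add: step_eq_of_real)
qed

text \<open>For gamma different from 2, a regular non-constant sequence has no zero increment:
  one zero increment would propagate around the cycle.\<close>

lemma increments_nonzero:
  fixes z :: "nat \<Rightarrow> real"
  assumes N: "0 < N" and "\<gamma> \<noteq> 2" and nonconst: "\<exists>k<N. z k \<noteq> z 0"
    and steps: "\<forall>l\<in>{1..N}. step_eq \<gamma> (D l) (D (cyc_succ N l))"
    and D: "\<forall>l\<in>{1..N}. D l = z (l mod N) - z (l - 1)"
  shows "\<forall>l\<in>{1..N}. D l \<noteq> 0"
proof (rule ccontr)
  assume "\<not> (\<forall>l\<in>{1..N}. D l \<noteq> 0)"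
  then obtain l0 where l0: "l0 \<in> {1..N}" "D l0 = 0" by blast
  have "D (cyc_succ N l) = 0" if "l \<in> {1..N}" "D l = 0" for l
    using step_eq_zero[OF \<open>\<gamma> \<noteq> 2\<close>] steps that by metis
  then have zero: "D l = 0" if "l \<in> {1..N}" for l
    using cyc_propagate[of l0 N "\<lambda>l. D l = 0", OF l0] that by blast
  have "k < N \<longrightarrow> z k = z 0" for k
  proof (induction k)
    case (Suc k)
    then show ?case using zero[of "Suc k"] D by auto
  qed simp
  then show False using nonconst by blast
qed

text \<open>Core of the converse: for gamma different from 1 and 2 all increments have the form
  K y^(e l) for a closed walk e, where y is the ratio of the first two increments.
  The case y = -1 is excluded because it would give gamma = 1.\<close>

lemma geometric_increments:
  fixes D :: "nat \<Rightarrow> real"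
  assumes N: "2 \<le> N" and g1: "\<gamma> \<noteq> 1" and g2: "\<gamma> \<noteq> 2"
    and steps: "\<forall>l\<in>{1..N}. step_eq \<gamma> (D l) (D (cyc_succ N l))"
    and nz: "\<forall>l\<in>{1..N}. D l \<noteq> 0"
  obtains y K e n l0 l1
  where "\<gamma> * (1 - y)^2 = 2 * (1 + y^2)" "y \<noteq> 1" "K \<noteq> 0"
    "\<forall>l\<in>{1..N}. D l = K * y ^ e l"
    "cyclic_walk N e" "\<forall>l\<in>{1..N}. e l \<le> Suc n"
    "l0 \<in> {1..N}" "e l0 = 0" "l1 \<in> {1..N}" "e l1 = Suc n"
proof -
  have one: "1 \<in> {1..N}" and two: "2 \<in> {1..N}" "cyc_succ N 1 = 2"
    using N by (auto simp: cyc_succ_def)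
  define y where "y = D 2 / D 1"
  have D1: "D 1 \<noteq> 0" and "D 2 \<noteq> 0" using nz one two by auto
  then have D2: "D 2 = D 1 * y" and "y \<noteq> 0" by (simp_all add: y_def)
  have base: "step_eq \<gamma> (D 1) (D 1 * y)" using steps one two D2 by metis
  have y1: "y \<noteq> 1" and gamma: "\<gamma> * (1 - y)^2 = 2 * (1 + y^2)"
    using gamma_of_ratio[OF base D1] by auto
  have "y \<noteq> -1"
  proof
    assume "y = -1"
    then have "\<gamma> * 4 = 4" using gamma by simp
    then show False using g1 by simp
  qed
  then have y: "y \<noteq> 0" "\<bar>y\<bar> \<noteq> 1" using y1 \<open>y \<noteq> 0\<close> by auto
  have ratio: "\<forall>l\<in>{1..N}. D (cyc_succ N l) = D l * y \<or> D l = D (cyc_succ N l) * y"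
    using step_eq_ratio[OF g2 _ base D1] steps by blast
  define E where "E = ratio_exponent D y"
  have E: "\<forall>l\<in>{1..N}. D l = D 1 * y powi E l"
    unfolding E_def using ratio_exponent_powers[OF \<open>y \<noteq> 0\<close> ratio] by blast
  have E_adj: "\<forall>l\<in>{1..N}. \<bar>E l - E (cyc_succ N l)\<bar> = 1"
    unfolding E_def using ratio_exponent_adjacent[OF y D1 ratio] by blast
  obtain m e n l0 l1 where e: "\<forall>l\<in>{1..N}. E l = m + int (e l)" and walk: "cyclic_walk N e"
    "\<forall>l\<in>{1..N}. e l \<le> Suc n" "l0 \<in> {1..N}" "e l0 = 0" "l1 \<in> {1..N}" "e l1 = Suc n"
    by (rule normalize_walk[OF _ E_adj]) (use N in simp)
  define K where "K = D 1 * y powi m"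
  have "D l = K * y ^ e l" if "l \<in> {1..N}" for l
    using bspec[OF E that] bspec[OF e that] y by (simp add: K_def power_int_add)
  moreover have "K \<noteq> 0" using D1 y by (simp add: K_def)
  ultimately show ?thesis using that gamma y1 walk by blast
qed

text \<open>The converse for real sequences: the walk of exponents yields the coefficients a_k, and
  the closing condition (sum of increments is zero) says that y is a root of p.\<close>

lemma real_converse:
  fixes z :: "nat \<Rightarrow> real"
  assumes N: "3 \<le> N" and g1: "\<gamma> \<noteq> 1" and g2: "\<gamma> \<noteq> 2"
    and reg: "regular_cyclic N \<gamma> (\<lambda>k. of_real (z k))" and nonconst: "\<exists>k<N. z k \<noteq> z 0"
  obtains n a y e K
  where "\<forall>k\<le>n. 0 < a k" "(y + 1) * (\<Sum>k\<le>n. real (a k) * y ^ k) = 0"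
    "\<gamma> = 2 * (1 + y^2) / (1 - y)^2" "admissible_exps a n N e" "K \<noteq> 0"
    "\<forall>k<N. z k = z 0 + K * (\<Sum>j\<in>{1..k}. y ^ e j)"
proof -
  define D where "D l = z (l mod N) - z (l - 1)" for l
  have steps: "\<forall>l\<in>{1..N}. step_eq \<gamma> (D l) (D (cyc_succ N l))"
    using real_regular_increments[OF _ reg] N unfolding D_def by auto
  have nz: "\<forall>l\<in>{1..N}. D l \<noteq> 0"
    using increments_nonzero[OF _ g2 nonconst steps] N by (simp add: D_def)
  have "2 \<le> N" using N by simp
  obtain y K e n l0 l1 where gamma: "\<gamma> * (1 - y)^2 = 2 * (1 + y^2)" "y \<noteq> 1" and "K \<noteq> 0"
    and DK: "\<forall>l\<in>{1..N}. D l = K * y ^ e l"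
    and walk: "cyclic_walk N e" "\<forall>l\<in>{1..N}. e l \<le> Suc n"
      "l0 \<in> {1..N}" "e l0 = 0" "l1 \<in> {1..N}" "e l1 = Suc n"
    using geometric_increments[OF \<open>2 \<le> N\<close> g1 g2 steps nz] by blast
  have adm: "admissible_exps (up_steps N e) n N e" and pos: "\<forall>k\<le>n. 0 < up_steps N e k"
    using admissible_of_cyclic_walk[OF walk] by blast+
  have sum_D: "(\<Sum>j\<in>{1..k}. D j) = K * (\<Sum>j\<in>{1..k}. y ^ e j)" if "k \<le> N" for k
    using DK that by (simp add: sum_distrib_left)
  have "K * (\<Sum>j\<in>{1..N}. y ^ e j) = 0"
    using increments_telescope[of N N z] sum_D[of N] by (simp add: D_def)
  then have root: "(y + 1) * (\<Sum>k\<le>n. real (up_steps N e k) * y ^ k) = 0"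
    using \<open>K \<noteq> 0\<close> admissible_power_sum[OF adm] by simp
  have zform: "z k = z 0 + K * (\<Sum>j\<in>{1..k}. y ^ e j)" if "k < N" for k
    using increments_telescope[of k N z] sum_D[of k] that by (simp add: D_def)
  have "\<gamma> = 2 * (1 + y^2) / (1 - y)^2" using gamma by (simp add: field_simps)
  from that[OF pos root this adm \<open>K \<noteq> 0\<close>] zform show ?thesis by blast
qed

lemma regular_cyclic_converse:
  fixes x :: "nat \<Rightarrow> complex" and \<gamma> :: real
  assumes N: "3 \<le> N" and g1: "\<gamma> \<noteq> 1" and g2: "\<gamma> \<noteq> 2"
    and reg: "regular_cyclic N \<gamma> x" and rc: "real_cyclic N x" and nc: "nonconstant_cyclic N x"
  shows "\<exists>(n::nat) (a::nat \<Rightarrow> nat) (y::real) e (c::complex) (\<mu>::complex) s x0.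
          (\<forall>k\<le>n. 0 < a k) \<and> (y + 1) * (\<Sum>k\<le>n. real (a k) * y ^ k) = 0 \<and>
          N = 2 * (\<Sum>k\<le>n. a k) \<and> \<gamma> = 2 * (1 + y^2) / (1 - y)^2 \<and>
          admissible_exps a n N e \<and> c \<noteq> 0 \<and> s < N \<and>
          (\<forall>k<N. c * x ((k + s) mod N) + \<mu> = constructed_seq x0 y e k)"
proof -
  obtain c0 \<mu>0 where c0: "c0 \<noteq> 0" and re: "\<forall>k<N. c0 * x k + \<mu>0 \<in> \<real>"
    using rc unfolding real_cyclic_def by blast
  define z where "z k = Re (c0 * x k + \<mu>0)" for k
  have z: "of_real (z k) = c0 * x k + \<mu>0" if "k < N" for k
    using re that unfolding z_def by (simp only: of_real_Re)
  have "regular_cyclic N \<gamma> (\<lambda>k. of_real (z k))"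
    using regular_cyclic_cong[of N "\<lambda>k. of_real (z k)" "\<lambda>k. c0 * x k + \<mu>0"] z
      regular_cyclic_affine[OF c0] reg by simp
  moreover have "\<exists>k<N. z k \<noteq> z 0"
  proof -
    obtain i j where "i < N" "j < N" "x i \<noteq> x j" using nc unfolding nonconstant_cyclic_def by blast
    then have "z i \<noteq> z j" using z c0 by (metis add_right_cancel mult_left_cancel)
    then show ?thesis using \<open>i < N\<close> \<open>j < N\<close> by metis
  qed
  ultimately obtain n a y e K where pos: "\<forall>k\<le>n. 0 < a k"
    and root: "(y + 1) * (\<Sum>k\<le>n. real (a k) * y ^ k) = 0"
    and gamma: "\<gamma> = 2 * (1 + y^2) / (1 - y)^2" and adm: "admissible_exps a n N e"
    and "K \<noteq> 0" and zform: "\<forall>k<N. z k = z 0 + K * (\<Sum>j\<in>{1..k}. y ^ e j)"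
    by (rule real_converse[OF N g1 g2])
  define x0 where "x0 = complex_of_real (z 0 / K)"
  have eqs: "c0 / of_real K * x ((k + 0) mod N) + \<mu>0 / of_real K = constructed_seq x0 y e k"
    if "k < N" for k
  proof -
    have eqs: "c0 / of_real K * x ((k + 0) mod N) + \<mu>0 / of_real K = of_real (z k / K)"
      using z[OF that] that by (simp add: add_divide_distrib)
    also have "z k / K = z 0 / K + (\<Sum>j\<in>{1..k}. y ^ e j)"
      using zform[rule_format, OF that] \<open>K \<noteq> 0\<close> by (simp add: field_simps)
    finally show ?thesis by (simp add: constructed_seq_real x0_def)
  qed
  moreover have "c0 / of_real K \<noteq> 0" using c0 \<open>K \<noteq> 0\<close> by simp
  moreover have "(0::nat) < N" using N by simp
  ultimately show ?thesis
    using pos root gamma adm admissible_length[OF adm] by blast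
qed

lemma regular_one_iff:
  "regular_cyclic N 1 x \<longleftrightarrow> (\<forall>k<N. x ((k + N - 1) mod N) = x ((k + 1) mod N))"
  unfolding regular_cyclic_steps step_eq_one by (auto simp: algebra_simps)

lemma regular_one_shift_two:
  assumes N: "0 < N" and reg: "regular_cyclic N 1 x"
  shows "x ((j + 2 * t) mod N) = x (j mod N)"
proof -
  have step: "x ((i + 2) mod N) = x (i mod N)" for i
  proof -
    define k where "k = (i + 1) mod N"
    have "k < N" using N by (simp add: k_def)
    moreover have "(k + N - 1) mod N = i mod N" using mod_pred[of "i + 1" N] N by (simp add: k_def)
    moreover have "(k + 1) mod N = (i + 2) mod N" by (simp add: k_def mod_Suc_eq)
    ultimately show ?thesis using reg unfolding regular_one_iff by metis
  qed
  show ?thesis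
  proof (induction t)
    case (Suc t)
    have "x ((j + 2 * Suc t) mod N) = x ((j + 2 * t + 2) mod N)" by (simp add: algebra_simps)
    also have "\<dots> = x ((j + 2 * t) mod N)" by (rule step)
    finally show ?case using Suc.IH by simp
  qed simp
qed

text \<open>A non-constant regular sequence for gamma = 1 has even length and alternates between
  two distinct values (for odd N the shift by two generates all shifts).\<close>

lemma regular_one_alternating:
  assumes N: "3 \<le> N" and reg: "regular_cyclic N 1 x" and nc: "nonconstant_cyclic N x"
  shows "even N" and "\<forall>k<N. x k = x (k mod 2)" and "x 1 \<noteq> x 0"
proof -
  have N0: "0 < N" using N by simp
  note shift = regular_one_shift_two[OF N0 reg]
  have not_const: "\<not> (\<forall>k<N. x k = x 0)"
    using nc unfolding nonconstant_cyclic_def by metis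
  show "even N"
  proof (rule ccontr)
    assume "odd N"
    have step: "x ((j + 1) mod N) = x (j mod N)" for j
    proof -
      have "j + 2 * ((N + 1) div 2) = (j + 1) + N"
        using \<open>odd N\<close> by (simp add: odd_two_times_div_two_succ)
      then have "(j + 2 * ((N + 1) div 2)) mod N = (j + 1) mod N" by (simp only: mod_add_self2)
      then show ?thesis using shift[of j "(N + 1) div 2"] by simp
    qed
    have "k < N \<longrightarrow> x k = x 0" for k
    proof (induction k)
      case (Suc k)
      show ?case
      proof
        assume "Suc k < N"
        then have "Suc k mod N = Suc k" "k mod N = k" by auto
        then show "x (Suc k) = x 0" using step[of k] Suc \<open>Suc k < N\<close> by simp
      qed
    qed simp
    then show False using not_const by blast
  qed
  show parity: "\<forall>k<N. x k = x (k mod 2)"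
  proof (intro allI impI)
    fix k assume "k < N"
    moreover have "k mod 2 < N" using N by linarith
    ultimately show "x k = x (k mod 2)" using shift[of "k mod 2" "k div 2"] by simp
  qed
  show "x 1 \<noteq> x 0"
  proof
    assume "x 1 = x 0"
    then have "\<forall>k<N. x k = x 0" using parity by (metis mod2_eq_if)
    then show False using not_const by blast
  qed
qed

lemma even_mod_even: "even (N::nat) \<Longrightarrow> even (a mod N) \<longleftrightarrow> even a"
  by (metis even_add even_mult_iff mod_mult_div_eq)

lemma regular_one_normal_form:
  fixes x :: "nat \<Rightarrow> complex"
  assumes N: "3 \<le> N" and reg: "regular_cyclic N 1 x" and nc: "nonconstant_cyclic N x"
  shows "even N \<and> (\<exists>c \<mu>. c \<noteq> 0 \<and> (\<forall>k<N. c * x k + \<mu> = (if even k then 0 else 1)))"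
proof -
  have "even N" and parity: "\<forall>k<N. x k = x (k mod 2)" and "x 1 \<noteq> x 0"
    using regular_one_alternating[OF N reg nc] by blast+
  define c where "c = 1 / (x 1 - x 0)"
  define \<mu> where "\<mu> = - x 0 / (x 1 - x 0)"
  have "c * x k + \<mu> = (if even k then 0 else 1)" if "k < N" for k
  proof -
    have "c * x k + \<mu> = (x (k mod 2) - x 0) / (x 1 - x 0)"
      using parity[rule_format, OF that] by (simp add: c_def \<mu>_def diff_divide_distrib)
    then show ?thesis using \<open>x 1 \<noteq> x 0\<close> by (simp add: mod2_eq_if)
  qed
  moreover have "c \<noteq> 0" using \<open>x 1 \<noteq> x 0\<close> by (simp add: c_def)
  ultimately show ?thesis using \<open>even N\<close> by blast
qed

lemma alternating_regular_one:
  fixes x :: "nat \<Rightarrow> complex"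
  assumes N: "3 \<le> N" and "even N" and c: "c \<noteq> 0"
    and h: "\<forall>k<N. c * x k + \<mu> = (if even k then 0 else 1)"
  shows "regular_cyclic N 1 x \<and> real_cyclic N x \<and> nonconstant_cyclic N x"
proof -
  have x: "x k = ((if even k then 0 else 1) - \<mu>) / c" if "k < N" for k
    using h that c by (simp add: eq_divide_eq algebra_simps)
  have "x ((k + N - 1) mod N) = x ((k + 1) mod N)" if "k < N" for k
  proof -
    have shift: "k + N - 1 = (k + 1) + (N - 2)" and "even (N - 2)" using N \<open>even N\<close> by auto
    have "even ((k + N - 1) mod N) \<longleftrightarrow> even (k + N - 1)" by (rule even_mod_even[OF \<open>even N\<close>])
    also have "\<dots> \<longleftrightarrow> even (k + 1)" unfolding shift even_add using \<open>even (N - 2)\<close> by simp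
    also have "\<dots> \<longleftrightarrow> even ((k + 1) mod N)" by (rule even_mod_even[OF \<open>even N\<close>, symmetric])
    finally have "even ((k + N - 1) mod N) \<longleftrightarrow> even ((k + 1) mod N)" .
    moreover have "(k + N - 1) mod N < N" "(k + 1) mod N < N" using N by auto
    ultimately show ?thesis using x[of "(k + N - 1) mod N"] x[of "(k + 1) mod N"] by simp
  qed
  then have "regular_cyclic N 1 x" by (simp add: regular_one_iff)
  moreover have "real_cyclic N x"
    unfolding real_cyclic_def using c h by (intro exI[of _ c] exI[of _ \<mu>]) auto
  moreover have "c * x 0 + \<mu> = 0" "c * x 1 + \<mu> = 1" using h N by auto
  then have "x 0 \<noteq> x 1" by auto
  then have "nonconstant_cyclic N x" unfolding nonconstant_cyclic_def using N
    by (intro exI[of _ 0]) (auto intro!: exI[of _ 1])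
  ultimately show ?thesis by blast
qed

lemma regular_one_characterization:
  fixes x :: "nat \<Rightarrow> complex"
  assumes N: "3 \<le> N"
  shows "(regular_cyclic N 1 x \<and> real_cyclic N x \<and> nonconstant_cyclic N x) \<longleftrightarrow>
        (even N \<and> (\<exists>c \<mu>. c \<noteq> 0 \<and> (\<forall>k<N. c * x k + \<mu> = (if even k then 0 else 1))))"
  using regular_one_normal_form[OF N] alternating_regular_one[OF N] by blast

lemma regular_two_iff:
  "regular_cyclic N 2 x \<longleftrightarrow> (\<forall>k<N. x ((k + N - 1) mod N) = x k \<or> x ((k + 1) mod N) = x k)"
  unfolding regular_cyclic_steps step_eq_two by auto

text \<open>The linear version of this property for a finite sequence v 0, ..., v (M-1).\<close>

definition locally_paired :: "nat \<Rightarrow> (nat \<Rightarrow> complex) \<Rightarrow> bool" where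
  "locally_paired M v \<longleftrightarrow> (\<forall>i<M. (0 < i \<and> v (i - 1) = v i) \<or> (Suc i < M \<and> v (Suc i) = v i))"

definition interval_blocks :: "nat \<Rightarrow> (nat \<Rightarrow> complex) \<Rightarrow> nat set set \<Rightarrow> bool" where
  "interval_blocks M v Q \<longleftrightarrow> partition_on {..<M} Q \<and>
     (\<forall>A\<in>Q. \<exists>lo hi. A = {lo..<hi} \<and> lo + 2 \<le> hi \<and> hi \<le> M \<and> (\<forall>i\<in>A. \<forall>j\<in>A. v i = v j))"

lemma interval_blocks_extend:
  assumes Q: "interval_blocks M' v Q" and M: "M' + 2 \<le> M" and c: "\<forall>i\<in>{M'..<M}. v i = v M'"
  shows "interval_blocks M v (insert {M'..<M} Q)"
proof -
  have pQ: "partition_on {..<M'} Q" using Q unfolding interval_blocks_def by blast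
  have "\<Union>Q = {..<M'}" using partition_onD1[OF pQ] by simp
  then have disj: "disjnt {M'..<M} (\<Union>Q)" by (auto simp: disjnt_def)
  have diff: "{..<M} - {M'..<M} = {..<M'}" using M by auto
  have "partition_on ({..<M} - {M'..<M}) Q" unfolding diff by (rule pQ)
  moreover have "{M'..<M} \<subseteq> {..<M}" "{M'..<M} \<noteq> {}" using M by auto
  ultimately have "partition_on {..<M} (insert {M'..<M} Q)"
    using partition_on_insert[OF disj] by blast
  moreover have "\<forall>A\<in>insert {M'..<M} Q.
      \<exists>lo hi. A = {lo..<hi} \<and> lo + 2 \<le> hi \<and> hi \<le> M \<and> (\<forall>i\<in>A. \<forall>j\<in>A. v i = v j)"
  proof
    fix A assume A: "A \<in> insert {M'..<M} Q"
    show "\<exists>lo hi. A = {lo..<hi} \<and> lo + 2 \<le> hi \<and> hi \<le> M \<and> (\<forall>i\<in>A. \<forall>j\<in>A. v i = v j)"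
    proof (cases "A = {M'..<M}")
      case True
      have "\<forall>i\<in>A. \<forall>j\<in>A. v i = v j"
      proof (intro ballI)
        fix i j assume "i \<in> A" "j \<in> A"
        then have "v i = v M'" "v j = v M'" using c True by blast+
        then show "v i = v j" by simp
      qed
      moreover have "M' + 2 \<le> M" "M \<le> M" using M by simp_all
      ultimately show ?thesis using True by blast
    next
      case False
      then have "A \<in> Q" using A by blast
      then have "\<exists>lo hi. A = {lo..<hi} \<and> lo + 2 \<le> hi \<and> hi \<le> M' \<and> (\<forall>i\<in>A. \<forall>j\<in>A. v i = v j)"
        using Q unfolding interval_blocks_def by (elim conjE) (rule bspec)
      then obtain lo hi where "A = {lo..<hi}" "lo + 2 \<le> hi" "hi \<le> M'" "\<forall>i\<in>A. \<forall>j\<in>A. v i = v j"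
        by blast
      moreover have "hi \<le> M" using \<open>hi \<le> M'\<close> M by simp
      ultimately show ?thesis by blast
    qed
  qed
  ultimately show ?thesis unfolding interval_blocks_def by (rule conjI)
qed

lemma locally_paired_shorten:
  assumes paired: "locally_paired M v" and not_paired: "\<not> locally_paired (M - 2) v"
  shows "3 \<le> M" and "v (M - 3) = v (M - 2)" and "locally_paired (M - 3) v"
proof -
  obtain i where i: "i < M - 2"
    and ni: "\<not> ((0 < i \<and> v (i - 1) = v i) \<or> (Suc i < M - 2 \<and> v (Suc i) = v i))"
    using not_paired unfolding locally_paired_def by blast
  have "(0 < i \<and> v (i - 1) = v i) \<or> (Suc i < M \<and> v (Suc i) = v i)"
    using paired i unfolding locally_paired_def by auto
  then have right: "v (Suc i) = v i" using ni by blast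
  with ni have iM: "i = M - 3" using i by auto
  show "3 \<le> M" using i iM by simp
  have "Suc i = M - 2" using i iM by simp
  then show "v (M - 3) = v (M - 2)" using right iM by metis
  have no_left: "\<not> (0 < M - 3 \<and> v (M - 4) = v (M - 3))" using ni iM by (simp add: numeral_eq_Suc)
  show "locally_paired (M - 3) v"
    unfolding locally_paired_def
  proof (intro allI impI)
    fix j assume j: "j < M - 3"
    have paired_j: "(0 < j \<and> v (j - 1) = v j) \<or> (Suc j < M \<and> v (Suc j) = v j)"
      using paired j unfolding locally_paired_def by auto
    show "(0 < j \<and> v (j - 1) = v j) \<or> (Suc j < M - 3 \<and> v (Suc j) = v j)"
    proof (cases "Suc j < M - 3")
      case False
      then have "Suc j = M - 3" "j = M - 4" using j by auto
      then show ?thesis using paired_j no_left by auto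
    qed (use paired_j in auto)
  qed
qed

lemma locally_paired_blocks: "locally_paired M v \<Longrightarrow> \<exists>Q. interval_blocks M v Q"
proof (induction M rule: less_induct)
  case (less M)
  consider "M = 0" | "M = 1" | "2 \<le> M" by linarith
  then show ?case
  proof cases
    case 1
    then show ?thesis unfolding interval_blocks_def by (auto simp: partition_on_empty)
  next
    case 2
    then show ?thesis using less.prems unfolding locally_paired_def by auto
  next
    case 3
    have "v (M - 2) = v (M - 1)"
      using less.prems 3 unfolding locally_paired_def
      by (auto dest: spec[of _ "M - 1"] simp: numeral_2_eq_2)
    show ?thesis
    proof (cases "locally_paired (M - 2) v")
      case True
      then obtain Q where Q: "interval_blocks (M - 2) v Q" using less.IH[of "M - 2"] 3 by auto
      have const: "\<forall>i\<in>{M - 2..<M}. v i = v (M - 2)"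
      proof
        fix i assume "i \<in> {M - 2..<M}"
        then have "i = M - 2 \<or> i = M - 1" by auto
        then show "v i = v (M - 2)" using \<open>v (M - 2) = v (M - 1)\<close> by auto
      qed
      have "M - 2 + 2 \<le> M" using 3 by simp
      from interval_blocks_extend[OF Q this const] show ?thesis by blast
    next
      case False
      note short = locally_paired_shorten[OF less.prems False]
      obtain Q where Q: "interval_blocks (M - 3) v Q" using less.IH[of "M - 3"] short by auto
      have const: "\<forall>i\<in>{M - 3..<M}. v i = v (M - 3)"
      proof
        fix i assume "i \<in> {M - 3..<M}"
        then have "i = M - 3 \<or> i = M - 2 \<or> i = M - 1" by auto
        then show "v i = v (M - 3)" using short(2) \<open>v (M - 2) = v (M - 1)\<close> by auto
      qed
      have "M - 3 + 2 \<le> M" using short(1) by simp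
      from interval_blocks_extend[OF Q this const] show ?thesis by blast
    qed
  qed
qed

lemma cyc_arc_full: "0 < N \<Longrightarrow> cyc_arc N 0 N = {..<N}"
  unfolding cyc_arc_def
proof (intro set_eqI iffI)
  fix a assume "a \<in> {(0 + i) mod N |i. i < N}" "0 < N"
  then show "a \<in> {..<N}" by auto
next
  fix a assume "a \<in> {..<N}"
  then have "a = (0 + a) mod N \<and> a < N" by simp
  then show "a \<in> {(0 + i) mod N |i. i < N}" by blast
qed

text \<open>A sequence made of constant arcs of length at least 2 is regular for gamma = 2:
  every vertex has a neighbour in its own arc.\<close>

lemma constant_segments_regular:
  fixes x :: "nat \<Rightarrow> complex"
  assumes N3: "3 \<le> N" and cs: "constant_segments N x"
  shows "regular_cyclic N 2 x"
  unfolding regular_two_iff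
proof (intro allI impI)
  fix k assume k: "k < N"
  have N0: "0 < N" using N3 by simp
  obtain P where P: "partition_on {..<N} P"
    and PA: "\<forall>A\<in>P. (\<exists>s L. s < N \<and> 2 \<le> L \<and> L \<le> N \<and> A = cyc_arc N s L) \<and> (\<forall>i\<in>A. \<forall>j\<in>A. x i = x j)"
    using cs unfolding constant_segments_def by blast
  have UP: "\<Union>P = {..<N}" using partition_onD1[OF P] by simp
  have "k \<in> \<Union>P" unfolding UP using k by simp
  then obtain A where A: "A \<in> P" "k \<in> A" by blast
  have PA1: "\<exists>s L. s < N \<and> 2 \<le> L \<and> L \<le> N \<and> A = cyc_arc N s L" and PA2: "\<forall>i\<in>A. \<forall>j\<in>A. x i = x j"
    using PA A(1) by blast+
  obtain s L where sL: "s < N" "2 \<le> L" "L \<le> N" "A = cyc_arc N s L" using PA1 by blast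
  have const: "x i = x j" if "i \<in> A" "j \<in> A" for i j using PA2 that by blast
  have "k \<in> cyc_arc N s L" using A(2) sL(4) by simp
  then obtain i where i: "i < L" "k = (s + i) mod N" unfolding cyc_arc_def by blast
  show "x ((k + N - 1) mod N) = x k \<or> x ((k + 1) mod N) = x k"
  proof (cases "Suc i < L")
    case True
    have "(s + Suc i) mod N \<in> A" using True sL(4) unfolding cyc_arc_def by blast
    moreover have "(k + 1) mod N = (s + Suc i) mod N" using i(2) by (simp add: mod_Suc_eq)
    ultimately have "x ((k + 1) mod N) = x k" using const A(2) by metis
    then show ?thesis by blast
  next
    case False
    then have i1: "1 \<le> i" using i(1) sL(2) by linarith
    have "(s + (i - 1)) mod N \<in> A" using i(1) sL(4) unfolding cyc_arc_def by force
    moreover have "(k + N - 1) mod N = (s + (i - 1)) mod N"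
    proof -
      have "(s + i - 1) mod N = ((s + i) mod N + N - 1) mod N" using mod_pred[of "s + i" N] i1 N0 by simp
      moreover have "s + i - 1 = s + (i - 1)" using i1 by simp
      ultimately show ?thesis using i(2) by simp
    qed
    ultimately have "x ((k + N - 1) mod N) = x k" using const A(2) by metis
    then show ?thesis by blast
  qed
qed

lemma constant_single_segment:
  assumes N: "2 \<le> N" and const: "\<forall>k<N. x k = x 0"
  shows "constant_segments N x"
  unfolding constant_segments_def
proof (intro exI[of _ "{{..<N}}"] conjI ballI)
  have "0 \<in> {..<N}" using N by simp
  then show "partition_on {..<N} {{..<N}}" by (intro partition_on_space) blast
next
  fix A assume "A \<in> {{..<N}}"
  then have "0 < N \<and> 2 \<le> N \<and> N \<le> N \<and> A = cyc_arc N 0 N" using N cyc_arc_full[of N] by simp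
  then show "\<exists>s L. s < N \<and> 2 \<le> L \<and> L \<le> N \<and> A = cyc_arc N s L" by blast
next
  fix A i j assume "A \<in> {{..<N}}" "i \<in> A" "j \<in> A"
  then have "x i = x 0" "x j = x 0" using const by blast+
  then show "x i = x j" by (simp only:)
qed

lemma cyc_arc_image: "cyc_arc N s L = (\<lambda>i. (s + i) mod N) ` {..<L}"
  unfolding cyc_arc_def by (auto simp: image_iff)

lemma rotated_interval_arc:
  "(\<lambda>i. (r + i) mod N) ` {lo..<hi} = cyc_arc N ((r + lo) mod N) (hi - lo)"
proof -
  define s where "s = (r + lo) mod N"
  have shift: "(r + (lo + t)) mod N = (s + t) mod N" for t
    by (simp add: s_def mod_add_left_eq add.assoc)
  have "(\<lambda>i. (r + i) mod N) ` {lo..<hi} = (\<lambda>t. (r + (lo + t)) mod N) ` {..<hi - lo}"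
  proof
    show "(\<lambda>i. (r + i) mod N) ` {lo..<hi} \<subseteq> (\<lambda>t. (r + (lo + t)) mod N) ` {..<hi - lo}"
    proof
      fix a assume "a \<in> (\<lambda>i. (r + i) mod N) ` {lo..<hi}"
      then obtain j where "lo \<le> j" "j < hi" "a = (r + j) mod N" by auto
      then have "j - lo \<in> {..<hi - lo}" "a = (r + (lo + (j - lo))) mod N" by auto
      then show "a \<in> (\<lambda>t. (r + (lo + t)) mod N) ` {..<hi - lo}" by blast
    qed
    show "(\<lambda>t. (r + (lo + t)) mod N) ` {..<hi - lo} \<subseteq> (\<lambda>i. (r + i) mod N) ` {lo..<hi}"
    proof
      fix a assume "a \<in> (\<lambda>t. (r + (lo + t)) mod N) ` {..<hi - lo}"
      then obtain t where "t < hi - lo" "a = (r + (lo + t)) mod N" by auto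
      then have "lo + t \<in> {lo..<hi}" "a = (r + (lo + t)) mod N" by auto
      then show "a \<in> (\<lambda>i. (r + i) mod N) ` {lo..<hi}" by blast
    qed
  qed
  also have "\<dots> = cyc_arc N s (hi - lo)"
    by (simp only: cyc_arc_image shift)
  finally show ?thesis by (simp add: s_def)
qed

lemma rotated_blocks_segments:
  assumes N: "0 < N" and Q: "interval_blocks N (\<lambda>i. x ((r + i) mod N)) Q"
  shows "constant_segments N x"
proof -
  define \<sigma> where "\<sigma> i = (r + i) mod N" for i
  have pQ: "partition_on {..<N} Q"
    and QA: "\<forall>B\<in>Q. \<exists>lo hi. B = {lo..<hi} \<and> lo + 2 \<le> hi \<and> hi \<le> N \<and>
                    (\<forall>i\<in>B. \<forall>j\<in>B. x (\<sigma> i) = x (\<sigma> j))"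
    using Q unfolding interval_blocks_def \<sigma>_def by blast+
  have inj: "inj_on \<sigma> {..<N}"
  proof (rule inj_onI)
    fix p q assume pq: "p \<in> {..<N}" "q \<in> {..<N}" "\<sigma> p = \<sigma> q"
    then have "(r + p) mod N = (r + q) mod N" by (simp add: \<sigma>_def)
    then have "p mod N = q mod N" by (simp add: nat_mod_eq_iff)
    then show "p = q" using pq by simp
  qed
  have "\<sigma> ` {..<N} = {..<N}"
    by (rule endo_inj_surj) (use inj N in \<open>auto simp: \<sigma>_def\<close>)
  then have pP: "partition_on {..<N} ((`) \<sigma> ` Q - {{}})"
    using partition_on_inj_image[OF pQ inj] by simp
  have arcs: "(\<exists>s L. s < N \<and> 2 \<le> L \<and> L \<le> N \<and> A = cyc_arc N s L) \<and> (\<forall>i\<in>A. \<forall>j\<in>A. x i = x j)"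
    if A: "A \<in> (`) \<sigma> ` Q - {{}}" for A
  proof -
    obtain B where B: "B \<in> Q" "A = \<sigma> ` B" using A by blast
    then obtain lo hi where lh: "B = {lo..<hi}" "lo + 2 \<le> hi" "hi \<le> N"
      and cB: "\<forall>i\<in>B. \<forall>j\<in>B. x (\<sigma> i) = x (\<sigma> j)" using QA by blast
    have "A = cyc_arc N ((r + lo) mod N) (hi - lo)"
      using rotated_interval_arc[of r N lo hi] B(2) lh(1) by (simp add: \<sigma>_def[abs_def])
    moreover have "(r + lo) mod N < N" "2 \<le> hi - lo" "hi - lo \<le> N" using N lh by auto
    moreover have "\<forall>i\<in>A. \<forall>j\<in>A. x i = x j" using cB B(2) by blast
    ultimately show ?thesis by blast
  qed
  show ?thesis unfolding constant_segments_def using pP arcs by blast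
qed

lemma regular_cyclic_rotate:
  assumes N: "0 < N" and reg: "regular_cyclic N \<gamma> x"
  shows "regular_cyclic N \<gamma> (\<lambda>i. x ((r + i) mod N))"
  unfolding regular_cyclic_def
proof (intro allI impI)
  fix i assume "i < N"
  define k where "k = (r + i) mod N"
  have left: "(r + (i + N - 1) mod N) mod N = (k + N - 1) mod N"
  proof -
    have "(r + (i + N - 1) mod N) mod N = (r + i + (N - 1)) mod N"
      using N by (simp add: mod_add_right_eq add.assoc)
    also have "\<dots> = (k + (N - 1)) mod N" by (simp add: k_def mod_add_left_eq)
    finally show ?thesis using N by simp
  qed
  have right: "(r + (i + 1) mod N) mod N = (k + 1) mod N"
    by (simp add: k_def mod_add_right_eq mod_Suc_eq)
  have "k < N" using N by (simp add: k_def)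
  then show "complex_of_real \<gamma> / 2 * (x ((r + (i + N - 1) mod N) mod N) + x ((r + (i + 1) mod N) mod N)
               - 2 * x ((r + i) mod N))^2
           = (x ((r + (i + N - 1) mod N) mod N) - x ((r + i) mod N))^2
             + (x ((r + (i + 1) mod N) mod N) - x ((r + i) mod N))^2"
    using reg unfolding left right k_def[symmetric] regular_cyclic_def by blast
qed

text \<open>Cutting the cycle between two neighbours with different values yields a locally
  paired linear sequence.\<close>

lemma regular_two_rotation_paired:
  assumes N: "0 < N" and reg: "regular_cyclic N 2 x" and b: "b < N" "x ((b + 1) mod N) \<noteq> x b"
  shows "locally_paired N (\<lambda>i. x ((b + 1 + i) mod N))"
proof -
  define v where "v i = x ((b + 1 + i) mod N)" for i
  have R: "v ((i + N - 1) mod N) = v i \<or> v ((i + 1) mod N) = v i" if "i < N" for i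
    using regular_cyclic_rotate[OF N reg, of "b + 1"] that unfolding regular_two_iff v_def by blast
  have "b + 1 + (N - 1) = b + N" using N by simp
  then have last: "v (N - 1) = x b" using b(1) by (simp add: v_def)
  have first: "v 0 = x ((b + 1) mod N)" by (simp add: v_def)
  have "(0 < i \<and> v (i - 1) = v i) \<or> (Suc i < N \<and> v (Suc i) = v i)" if i: "i < N" for i
    using R[OF i]
  proof
    assume "v ((i + N - 1) mod N) = v i"
    moreover have "i \<noteq> 0 \<Longrightarrow> (i + N - 1) mod N = i - 1" using i pred_mod_cycle[of i N] by simp
    moreover have "i = 0 \<Longrightarrow> (i + N - 1) mod N = N - 1" using N by simp
    ultimately show ?thesis using last first b(2) by (cases "i = 0") auto
  next
    assume "v ((i + 1) mod N) = v i"
    moreover have "Suc i < N \<Longrightarrow> (i + 1) mod N = Suc i" by simp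
    moreover have "i = N - 1 \<and> (i + 1) mod N = 0" if "\<not> Suc i < N"
    proof -
      have "Suc i = N" using i that by simp
      then show ?thesis by auto
    qed
    ultimately show ?thesis using last first b(2) by (cases "Suc i < N") auto
  qed
  then show ?thesis unfolding locally_paired_def v_def by blast
qed

lemma regular_two_segments:
  assumes N: "3 \<le> N" and reg: "regular_cyclic N 2 x"
  shows "constant_segments N x"
proof (cases "\<forall>k<N. x ((k + 1) mod N) = x k")
  case True
  have "k < N \<longrightarrow> x k = x 0" for k
  proof (induction k)
    case (Suc k)
    show ?case
    proof
      assume "Suc k < N"
      then have "x (Suc k) = x k" using True by (metis add.commute plus_1_eq_Suc Suc_lessD mod_less)
      then show "x (Suc k) = x 0" using Suc \<open>Suc k < N\<close> by simp
    qed
  qed simp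
  then have "\<forall>k<N. x k = x 0" by blast
  moreover have "2 \<le> N" using N by simp
  ultimately show ?thesis by (intro constant_single_segment)
next
  case False
  then obtain b where b: "b < N" "x ((b + 1) mod N) \<noteq> x b" by auto
  have "0 < N" using N by simp
  obtain Q where "interval_blocks N (\<lambda>i. x ((b + 1 + i) mod N)) Q"
    using locally_paired_blocks[OF regular_two_rotation_paired[OF \<open>0 < N\<close> reg b]] by blast
  then show ?thesis by (rule rotated_blocks_segments[OF \<open>0 < N\<close>])
qed

lemma regular_two_characterization:
  assumes "3 \<le> N"
  shows "regular_cyclic N 2 x \<longleftrightarrow> constant_segments N x"
  using regular_two_segments[OF assms] constant_segments_regular[OF assms] by blast

theorem theorem3p1:
  shows
   "(\<forall>(n::nat) (a::nat \<Rightarrow> nat) (y::real).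
       (\<forall>k\<le>n. 0 < a k) \<longrightarrow> (y + 1) * (\<Sum>k\<le>n. real (a k) * y ^ k) = 0 \<longrightarrow>
       (let N = 2 * (\<Sum>k\<le>n. a k); \<gamma> = 2 * (1 + y^2) / (1 - y)^2 in
          (\<exists>e. admissible_exps a n N e) \<and>
          (\<forall>e x0. admissible_exps a n N e \<longrightarrow>
              constructed_seq x0 y e N = constructed_seq x0 y e 0 \<and>
              regular_cyclic N \<gamma> (constructed_seq x0 y e) \<and>
              real_cyclic N (constructed_seq x0 y e))))
    \<and>
    (\<forall>(N::nat) (\<gamma>::real) (x::nat \<Rightarrow> complex).
       3 \<le> N \<longrightarrow> \<gamma> \<noteq> 1 \<longrightarrow> \<gamma> \<noteq> 2 \<longrightarrow>
       regular_cyclic N \<gamma> x \<longrightarrow> real_cyclic N x \<longrightarrow> nonconstant_cyclic N x \<longrightarrow>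
       (\<exists>(n::nat) (a::nat \<Rightarrow> nat) (y::real) e (c::complex) (\<mu>::complex) s x0.
          (\<forall>k\<le>n. 0 < a k) \<and> (y + 1) * (\<Sum>k\<le>n. real (a k) * y ^ k) = 0 \<and>
          N = 2 * (\<Sum>k\<le>n. a k) \<and> \<gamma> = 2 * (1 + y^2) / (1 - y)^2 \<and>
          admissible_exps a n N e \<and> c \<noteq> 0 \<and> s < N \<and>
          (\<forall>k<N. c * x ((k + s) mod N) + \<mu> = constructed_seq x0 y e k)))
    \<and>
    (\<forall>(N::nat) (x::nat \<Rightarrow> complex). 3 \<le> N \<longrightarrow>
       (regular_cyclic N 2 x \<longleftrightarrow> constant_segments N x))
    \<and>
    (\<forall>(N::nat) (x::nat \<Rightarrow> complex). 3 \<le> N \<longrightarrow>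
       ((regular_cyclic N 1 x \<and> real_cyclic N x \<and> nonconstant_cyclic N x) \<longleftrightarrow>
        (even N \<and> (\<exists>c \<mu>. c \<noteq> 0 \<and> (\<forall>k<N. c * x k + \<mu> = (if even k then 0 else 1))))))"
proof (intro conjI allI impI)
  fix n a y
  assume pos: "\<forall>k\<le>n. 0 < a k" and root: "(y + 1) * (\<Sum>k\<le>n. real (a k) * y ^ k) = 0"
  show "let N = 2 * (\<Sum>k\<le>n. a k); \<gamma> = 2 * (1 + y^2) / (1 - y)^2 in
          (\<exists>e. admissible_exps a n N e) \<and>
          (\<forall>e x0. admissible_exps a n N e \<longrightarrow>
              constructed_seq x0 y e N = constructed_seq x0 y e 0 \<and>
              regular_cyclic N \<gamma> (constructed_seq x0 y e) \<and>
              real_cyclic N (constructed_seq x0 y e))"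
    unfolding Let_def using exists_admissible[OF pos] constructed_seq_regular[OF pos root] by blast
next
  fix N :: nat and \<gamma> :: real and x :: "nat \<Rightarrow> complex"
  assume "3 \<le> N" "\<gamma> \<noteq> 1" "\<gamma> \<noteq> 2" "regular_cyclic N \<gamma> x" "real_cyclic N x" "nonconstant_cyclic N x"
  then show "\<exists>(n::nat) (a::nat \<Rightarrow> nat) (y::real) e (c::complex) (\<mu>::complex) s x0.
          (\<forall>k\<le>n. 0 < a k) \<and> (y + 1) * (\<Sum>k\<le>n. real (a k) * y ^ k) = 0 \<and>
          N = 2 * (\<Sum>k\<le>n. a k) \<and> \<gamma> = 2 * (1 + y^2) / (1 - y)^2 \<and>
          admissible_exps a n N e \<and> c \<noteq> 0 \<and> s < N \<and>
          (\<forall>k<N. c * x ((k + s) mod N) + \<mu> = constructed_seq x0 y e k)"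
    by (rule regular_cyclic_converse)
next
  fix N :: nat and x :: "nat \<Rightarrow> complex"
  assume "3 \<le> N"
  then show "regular_cyclic N 2 x \<longleftrightarrow> constant_segments N x"
    by (rule regular_two_characterization)
next
  fix N :: nat and x :: "nat \<Rightarrow> complex"
  assume "3 \<le> N"
  then show "(regular_cyclic N 1 x \<and> real_cyclic N x \<and> nonconstant_cyclic N x) \<longleftrightarrow>
        (even N \<and> (\<exists>c \<mu>. c \<noteq> 0 \<and> (\<forall>k<N. c * x k + \<mu> = (if even k then 0 else 1))))"
    by (rule regular_one_characterization)
qed

end
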